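(* Fix $\rho>0$. There exists a constant $C=C(\rho)$ such that for every positive integer $K$ and every interval $I\subset\mathbb{Z}$ of $K$ consecutive sites, with $\mathcal{M}_I=\sigma\big(\sum_{x\in I}\eta(x)\big)$, $$E_{\nu_\rho}\Big[\Big(E_{\nu_\rho}\Big(\sum_{x\in I}V_g(\eta(x))\,\Big|\,\mathcal{M}_I\Big)\Big)^2\Big]\le C.$$
   Context: $g(k)=1_{\{k\ge1\}}$ for $k\in\mathbb{N}=\{0,1,2,\dots\}$. $\nu_\rho$ is the product measure on $\mathbb{N}^{\mathbb{Z}}$ with geometric marginals $\nu_\rho(\eta(x)=k)=\frac{1}{1+\rho}\big(\frac{\rho}{1+\rho}\big)^k$, $k\ge0$ (mean $\rho$). $\phi(\rho)=E_{\nu_\rho}[g(\eta(0))]=\frac{\rho}{1+\rho}$ and $V_g(\eta(x))=g(\eta(x))-\phi(\rho)-\phi'(\rho)[\eta(x)-\rho]$. *)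

theory Defs
  imports "HOL-Probability.Probability"
begin

text \<open>Single-site marginal: geometric with mean rho,
  nu(eta(x)=k) = 1/(1+rho) * (rho/(1+rho))^k.\<close>
definition marg :: "real \<Rightarrow> nat pmf" where
  "marg \<rho> = geometric_pmf (1 / (1 + \<rho>))"

definition nu :: "real \<Rightarrow> (int \<Rightarrow> nat) measure" where
  "nu \<rho> = PiM UNIV (\<lambda>_::int. measure_pmf (marg \<rho>))"

definition g :: "nat \<Rightarrow> real" where
  "g k = (if k \<ge> 1 then 1 else 0)"

definition phi :: "real \<Rightarrow> real" where
  "phi \<rho> = \<rho> / (1 + \<rho>)"

definition Vg :: "real \<Rightarrow> nat \<Rightarrow> real" where
  "Vg \<rho> k = g k - phi \<rho> - deriv phi \<rho> * (real k - \<rho>)"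

definition MI :: "real \<Rightarrow> int set \<Rightarrow> (int \<Rightarrow> nat) measure" where
  "MI \<rho> I = vimage_algebra (space (nu \<rho>)) (\<lambda>\<eta>. \<Sum>x\<in>I. \<eta> x) (count_space UNIV)"

end

theory Submission
  imports Defs
begin

(*
  Under the product measure nu rho with geometric marginals, the block sum
  N = sum_{x in I} eta(x) over K sites is negative binomial NB(K, 1/(1+rho)).
  Since geometric variables are memoryless, P(eta(x) >= 1, N = n) = rho/(1+rho) P(N = n-1),
  so the conditional probability that a given site of the block is occupied given N = n is
  n/(n+K-1).  Hence E(sum V_g | M_I) = block_cond_V rho K N with the explicit function
    block_cond_V rho K n = K n/(n+K-1) - K phi(rho) - phi'(rho) (n - K rho).
  An exact algebraic identity writes (1+rho)^2 (n+K-1) block_cond_V as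
  K rho (1+rho) - d^2 + d with d = n - K rho, which bounds block_cond_V^2 by a constant plus
  (d^2 + d^4)/K^2.  The second and fourth central moments of NB(K) are O(K) and O(K^2); they are
  computed from the factorial moments E[N(N-1)...(N-j+1)] = K(K+1)...(K+j-1) rho^j.
*)

abbreviation NB :: "real \<Rightarrow> nat \<Rightarrow> nat measure" where
  "NB \<rho> K \<equiv> measure_pmf (neg_binomial_pmf K (1 / (1 + \<rho>)))"

lemma prob_space_nu: "prob_space (nu \<rho>)"
  unfolding nu_def by (intro prob_space_PiM measure_pmf.prob_space_axioms)

lemma distr_nu_restrict:
  assumes "finite J"
  shows "distr (nu \<rho>) (PiM J (\<lambda>_. measure_pmf (marg \<rho>))) (\<lambda>\<eta>. restrict \<eta> J)
       = PiM J (\<lambda>_. measure_pmf (marg \<rho>))"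
proof -
  interpret product_prob_space "\<lambda>_::int. measure_pmf (marg \<rho>)" "UNIV :: int set"
    by (intro product_prob_spaceI measure_pmf.prob_space_axioms)
  show ?thesis unfolding nu_def using assms by (intro distr_PiM_restrict_finite) auto
qed

lemma nn_integral_nu_restrict:
  assumes "finite J" and "f \<in> borel_measurable (PiM J (\<lambda>_. measure_pmf (marg \<rho>)))"
  shows "(\<integral>\<^sup>+\<eta>. f (restrict \<eta> J) \<partial>nu \<rho>) = (\<integral>\<^sup>+\<omega>. f \<omega> \<partial>PiM J (\<lambda>_. measure_pmf (marg \<rho>)))"
proof -
  have "(\<lambda>\<eta>. restrict \<eta> J) \<in> nu \<rho> \<rightarrow>\<^sub>M PiM J (\<lambda>_. measure_pmf (marg \<rho>))"
    unfolding nu_def by (rule measurable_restrict_subset) auto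
  then have "(\<integral>\<^sup>+\<eta>. f (restrict \<eta> J) \<partial>nu \<rho>)
      = (\<integral>\<^sup>+\<omega>. f \<omega> \<partial>distr (nu \<rho>) (PiM J (\<lambda>_. measure_pmf (marg \<rho>))) (\<lambda>\<eta>. restrict \<eta> J))"
    using assms(2) by (simp add: nn_integral_distr)
  then show ?thesis using assms(1) by (simp add: distr_nu_restrict)
qed

lemma measurable_nat_pair_comp:
  assumes "f1 \<in> M \<rightarrow>\<^sub>M count_space (UNIV :: nat set)" "f2 \<in> M \<rightarrow>\<^sub>M count_space (UNIV :: nat set)"
  shows "(\<lambda>\<omega>. H (f1 \<omega>) (f2 \<omega>)) \<in> borel_measurable M"
proof -
  have "(\<lambda>\<omega>. (f1 \<omega>, f2 \<omega>)) \<in> M \<rightarrow>\<^sub>M count_space UNIV \<Otimes>\<^sub>M count_space UNIV"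
    using assms by measurable
  then have "(\<lambda>\<omega>. (f1 \<omega>, f2 \<omega>)) \<in> M \<rightarrow>\<^sub>M count_space UNIV"
    by (simp add: pair_measure_countable)
  from measurable_compose[OF this, of "\<lambda>z. H (fst z) (snd z)" borel] show ?thesis by simp
qed

lemma site_indep_block:
  fixes H :: "nat \<Rightarrow> nat \<Rightarrow> ennreal"
  assumes fin: "finite J" and x: "x \<notin> J"
  shows "(\<integral>\<^sup>+\<eta>. H (\<eta> x) (\<Sum>y\<in>J. \<eta> y) \<partial>nu \<rho>)
       = (\<integral>\<^sup>+\<eta>. \<integral>\<^sup>+k. H k (\<Sum>y\<in>J. \<eta> y) \<partial>marg \<rho> \<partial>nu \<rho>)"
proof -
  let ?M = "\<lambda>_::int. measure_pmf (marg \<rho>)"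
  interpret product_prob_space ?M "UNIV :: int set"
    by (intro product_prob_spaceI measure_pmf.prob_space_axioms)
  define h where "h = (\<lambda>\<omega>::int \<Rightarrow> nat. H (\<omega> x) (\<Sum>y\<in>J. \<omega> y))"
  define H' where "H' = (\<lambda>m. \<integral>\<^sup>+k. H k m \<partial>marg \<rho>)"
  have h_meas: "h \<in> borel_measurable (PiM (insert x J) ?M)"
    unfolding h_def by (rule measurable_nat_pair_comp) measurable
  have H'_meas: "(\<lambda>\<omega>. H' (\<Sum>y\<in>J. \<omega> y)) \<in> borel_measurable (PiM J ?M)"
    using measurable_nat_pair_comp[of "\<lambda>\<omega>. \<Sum>y\<in>J. \<omega> y" "PiM J ?M" "\<lambda>\<omega>. \<Sum>y\<in>J. \<omega> y" "\<lambda>m _. H' m"]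
    by measurable
  have "(\<integral>\<^sup>+\<eta>. H (\<eta> x) (\<Sum>y\<in>J. \<eta> y) \<partial>nu \<rho>) = (\<integral>\<^sup>+\<eta>. h (restrict \<eta> (insert x J)) \<partial>nu \<rho>)"
    unfolding h_def by (intro nn_integral_cong) simp
  also have "\<dots> = (\<integral>\<^sup>+\<omega>. h \<omega> \<partial>PiM (insert x J) ?M)"
    using fin h_meas by (intro nn_integral_nu_restrict) auto
  also have "\<dots> = (\<integral>\<^sup>+\<omega>. \<integral>\<^sup>+k. h (fun_upd \<omega> x k) \<partial>marg \<rho> \<partial>PiM J ?M)"
    using fin x h_meas by (rule product_nn_integral_insert)
  also have "\<dots> = (\<integral>\<^sup>+\<omega>. H' (\<Sum>y\<in>J. \<omega> y) \<partial>PiM J ?M)"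
  proof -
    have "(\<Sum>y\<in>J. (fun_upd \<omega> x k) y) = (\<Sum>y\<in>J. \<omega> y)" for \<omega> :: "int \<Rightarrow> nat" and k
      using x by (intro sum.cong) auto
    then show ?thesis unfolding h_def H'_def by simp
  qed
  also have "\<dots> = (\<integral>\<^sup>+\<eta>. H' (\<Sum>y\<in>J. restrict \<eta> J y) \<partial>nu \<rho>)"
    using fin H'_meas by (intro nn_integral_nu_restrict[symmetric]) auto
  finally show ?thesis unfolding H'_def by simp
qed

lemma NB_convolution:
  "(\<integral>\<^sup>+m. \<integral>\<^sup>+k. F (k + m) \<partial>marg \<rho> \<partial>NB \<rho> K) = (\<integral>\<^sup>+n. F n \<partial>NB \<rho> (Suc K))"
proof -
  have "(\<integral>\<^sup>+m. \<integral>\<^sup>+k. F (k + m) \<partial>marg \<rho> \<partial>NB \<rho> K)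
      = (\<integral>\<^sup>+z. F (fst z + snd z) \<partial>pair_pmf (neg_binomial_pmf K (1 / (1 + \<rho>))) (marg \<rho>))"
    by (simp add: nn_integral_pair_pmf' add.commute)
  also have "\<dots> = (\<integral>\<^sup>+z. F (fst z + snd z) \<partial>pair_pmf (marg \<rho>) (neg_binomial_pmf K (1 / (1 + \<rho>))))"
    by (subst pair_commute_pmf) (simp add: case_prod_unfold add.commute)
  also have "\<dots> = (\<integral>\<^sup>+n. F n \<partial>NB \<rho> (Suc K))"
    by (simp add: neg_binomial_pmf_Suc marg_def case_prod_unfold)
  finally show ?thesis .
qed

lemma block_sum_law:
  assumes "finite J"
  shows "(\<integral>\<^sup>+\<eta>. H (\<Sum>y\<in>J. \<eta> y) \<partial>nu \<rho>) = (\<integral>\<^sup>+n. H n \<partial>NB \<rho> (card J))"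
  using assms
proof (induction J arbitrary: H rule: finite_induct)
  case empty
  interpret prob_space "nu \<rho>" by (rule prob_space_nu)
  show ?case by (simp add: emeasure_space_1)
next
  case (insert x J)
  have "(\<integral>\<^sup>+\<eta>. H (\<Sum>y\<in>insert x J. \<eta> y) \<partial>nu \<rho>) = (\<integral>\<^sup>+\<eta>. H (\<eta> x + (\<Sum>y\<in>J. \<eta> y)) \<partial>nu \<rho>)"
    using insert.hyps by simp
  also have "\<dots> = (\<integral>\<^sup>+\<eta>. \<integral>\<^sup>+k. H (k + (\<Sum>y\<in>J. \<eta> y)) \<partial>marg \<rho> \<partial>nu \<rho>)"
    using site_indep_block[OF insert.hyps, where H="\<lambda>k m. H (k + m)"] by simp
  also have "\<dots> = (\<integral>\<^sup>+m. \<integral>\<^sup>+k. H (k + m) \<partial>marg \<rho> \<partial>NB \<rho> (card J))"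
    by (rule insert.IH)
  also have "\<dots> = (\<integral>\<^sup>+n. H n \<partial>NB \<rho> (card (insert x J)))"
    using insert.hyps by (simp add: NB_convolution)
  finally show ?case .
qed

lemma nn_integral_pmf_shift:
  fixes h :: "nat \<Rightarrow> ennreal"
  assumes "h 0 = 0"
  shows "(\<integral>\<^sup>+n. h n \<partial>measure_pmf P) = (\<integral>\<^sup>+m. ennreal (pmf P (Suc m)) * h (Suc m) \<partial>count_space UNIV)"
proof -
  let ?w = "\<lambda>n. ennreal (pmf P n) * h n"
  have "(\<integral>\<^sup>+m. ?w (Suc m) \<partial>count_space UNIV) = (\<integral>\<^sup>+n. ?w n \<partial>count_space (range Suc))"
    by (rule nn_integral_bij_count_space) (simp add: bij_betw_def)
  also have "\<dots> = (\<integral>\<^sup>+n. ?w n * indicator (range Suc) n \<partial>count_space UNIV)"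
    by (simp add: nn_integral_count_space_indicator)
  also have "\<dots> = (\<integral>\<^sup>+n. ?w n \<partial>count_space UNIV)"
    using assms by (intro nn_integral_cong) (auto simp: indicator_def, metis not0_implies_Suc rangeI)
  finally show ?thesis by (simp add: nn_integral_measure_pmf)
qed

lemma pmf_marg_Suc:
  assumes "\<rho> > 0"
  shows "pmf (marg \<rho>) (Suc k) = \<rho> / (1 + \<rho>) * pmf (marg \<rho>) k"
proof -
  have "pmf (marg \<rho>) n = (\<rho> / (1 + \<rho>)) ^ n * (1 / (1 + \<rho>))" for n
    unfolding marg_def by (subst pmf_geometric) (use assms in \<open>auto simp: field_simps\<close>)
  then show ?thesis by simp
qed

(* Two forms of the ratio pmf(m+1)/pmf(m) of NB, both from binomial absorption:
   the first keeps the index K, the second passes to NB(K+1) (size biasing). *)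
lemma pmf_NB_Suc:
  fixes \<rho> :: real
  assumes "\<rho> > 0"
  defines "P \<equiv> \<lambda>K. pmf (neg_binomial_pmf K (1 / (1 + \<rho>)))"
  shows "P K (Suc m) * real (Suc m) = \<rho> / (1 + \<rho>) * real (m + K) * P K m"
    and "P K (Suc m) * real (Suc m) = real K * \<rho> * P (Suc K) m"
proof -
  define p q where "p = 1 / (1 + \<rho>)" and "q = \<rho> / (1 + \<rho>)"
  have p: "p \<in> {0<..1}" and q: "1 - p = q" and qp: "q = \<rho> * p"
    unfolding p_def q_def using assms by (auto simp: field_simps)
  have P: "P K n = real ((n + K - 1) choose n) * p ^ K * q ^ n" for K n
    unfolding P_def p_def[symmetric] pmf_neg_binomial[OF p] q ..
  have "Suc m * ((m + K) choose Suc m) = (m + K) * ((m + K - 1) choose m)"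
    by (rule binomial_absorption)
  then have absorb1: "real (Suc m) * real ((m + K) choose Suc m) = real (m + K) * real ((m + K - 1) choose m)"
    by (metis of_nat_mult)
  have "(m + K - m) * ((m + K) choose m) = (m + K) * ((m + K - 1) choose m)"
    by (rule binomial_absorb_comp)
  then have absorb2: "real (m + K) * real ((m + K - 1) choose m) = real K * real ((m + K) choose m)"
    by (metis add_diff_cancel_left' of_nat_mult)
  have "P K (Suc m) * real (Suc m) = (real (Suc m) * real ((m + K) choose Suc m)) * p ^ K * q ^ Suc m"
    unfolding P by (simp add: mult_ac del: of_nat_Suc of_nat_add)
  also have "\<dots> = (real (m + K) * real ((m + K - 1) choose m)) * p ^ K * q ^ Suc m"
    by (simp only: absorb1)
  finally have step: "P K (Suc m) * real (Suc m) = (real (m + K) * real ((m + K - 1) choose m)) * p ^ K * q ^ Suc m" .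
  show "P K (Suc m) * real (Suc m) = \<rho> / (1 + \<rho>) * real (m + K) * P K m"
    unfolding step unfolding P q_def[symmetric] by (simp add: mult_ac del: of_nat_Suc of_nat_add)
  show "P K (Suc m) * real (Suc m) = real K * \<rho> * P (Suc K) m"
    unfolding step absorb2 unfolding P qp by (simp add: mult_ac)
qed

(* Memorylessness of the geometric law: conditioning a site on being occupied
   amounts to a shift by one, with weight rho/(1+rho). *)
lemma marg_occupied_shift:
  fixes F :: "nat \<Rightarrow> ennreal"
  assumes "\<rho> > 0"
  shows "(\<integral>\<^sup>+k. ennreal (g k) * F k \<partial>marg \<rho>) = ennreal (\<rho> / (1 + \<rho>)) * (\<integral>\<^sup>+k. F (Suc k) \<partial>marg \<rho>)"
proof -
  have "(\<integral>\<^sup>+k. ennreal (g k) * F k \<partial>marg \<rho>)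
      = (\<integral>\<^sup>+m. ennreal (pmf (marg \<rho>) (Suc m)) * F (Suc m) \<partial>count_space UNIV)"
    by (subst nn_integral_pmf_shift) (simp_all add: g_def)
  also have "\<dots> = (\<integral>\<^sup>+m. ennreal (\<rho> / (1 + \<rho>)) * (ennreal (pmf (marg \<rho>) m) * F (Suc m)) \<partial>count_space UNIV)"
  proof -
    have "ennreal (pmf (marg \<rho>) (Suc m)) = ennreal (\<rho> / (1 + \<rho>)) * ennreal (pmf (marg \<rho>) m)" for m
      unfolding pmf_marg_Suc[OF assms] by (rule ennreal_mult) (use assms in auto)
    then show ?thesis by (simp add: mult.assoc)
  qed
  also have "\<dots> = ennreal (\<rho> / (1 + \<rho>)) * (\<integral>\<^sup>+k. F (Suc k) \<partial>marg \<rho>)"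
    by (simp add: nn_integral_cmult nn_integral_measure_pmf)
  finally show ?thesis .
qed

(* The conditional probability n/(n+K-1) that a given site of a K-block is occupied
   when the block holds n particles. *)
definition cond_occupied :: "nat \<Rightarrow> nat \<Rightarrow> real" where
  "cond_occupied K n = real n / (real n + real K - 1)"

lemma cond_occupied_bounds: "K \<ge> 1 \<Longrightarrow> 0 \<le> cond_occupied K n \<and> cond_occupied K n \<le> 1"
  unfolding cond_occupied_def by (auto simp: divide_le_eq_1)

lemma NB_occupied_shift:
  fixes F :: "nat \<Rightarrow> ennreal"
  assumes "\<rho> > 0" and "K \<ge> 1"
  shows "(\<integral>\<^sup>+n. ennreal (cond_occupied K n) * F n \<partial>NB \<rho> K)
       = ennreal (\<rho> / (1 + \<rho>)) * (\<integral>\<^sup>+n. F (Suc n) \<partial>NB \<rho> K)"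
proof -
  let ?P = "pmf (neg_binomial_pmf K (1 / (1 + \<rho>)))"
  have weight: "?P (Suc m) * cond_occupied K (Suc m) = \<rho> / (1 + \<rho>) * ?P m" for m
  proof -
    have pos: "real (m + K) > 0" using assms(2) by simp
    have "?P (Suc m) * cond_occupied K (Suc m) = ?P (Suc m) * real (Suc m) / real (m + K)"
      unfolding cond_occupied_def by simp
    also have "\<dots> = \<rho> / (1 + \<rho>) * real (m + K) * ?P m / real (m + K)"
      by (simp only: pmf_NB_Suc(1)[OF assms(1)])
    finally show ?thesis using pos by simp
  qed
  have "(\<integral>\<^sup>+n. ennreal (cond_occupied K n) * F n \<partial>NB \<rho> K)
      = (\<integral>\<^sup>+m. ennreal (?P (Suc m)) * (ennreal (cond_occupied K (Suc m)) * F (Suc m)) \<partial>count_space UNIV)"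
    by (subst nn_integral_pmf_shift) (simp_all add: cond_occupied_def)
  also have "\<dots> = (\<integral>\<^sup>+m. ennreal (\<rho> / (1 + \<rho>)) * (ennreal (?P m) * F (Suc m)) \<partial>count_space UNIV)"
  proof (intro nn_integral_cong)
    fix m
    have "ennreal (?P (Suc m)) * ennreal (cond_occupied K (Suc m)) = ennreal (\<rho> / (1 + \<rho>)) * ennreal (?P m)"
      using assms cond_occupied_bounds[OF assms(2)] by (simp add: weight flip: ennreal_mult)
    then show "ennreal (?P (Suc m)) * (ennreal (cond_occupied K (Suc m)) * F (Suc m))
             = ennreal (\<rho> / (1 + \<rho>)) * (ennreal (?P m) * F (Suc m))"
      by (simp add: mult.assoc[symmetric])
  qed
  also have "\<dots> = ennreal (\<rho> / (1 + \<rho>)) * (\<integral>\<^sup>+n. F (Suc n) \<partial>NB \<rho> K)"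
    by (simp add: nn_integral_cmult nn_integral_measure_pmf)
  finally show ?thesis .
qed

(* Conditional occupation law: E[g(eta x) F(N)] = E[cond_occupied K N * F(N)] for x in J,
   obtained by separating x from the rest of the block and comparing both shifts. *)
lemma block_occupied_given_sum:
  fixes F :: "nat \<Rightarrow> ennreal"
  assumes rho: "\<rho> > 0" and fin: "finite J" and x: "x \<in> J"
  shows "(\<integral>\<^sup>+\<eta>. ennreal (g (\<eta> x)) * F (\<Sum>y\<in>J. \<eta> y) \<partial>nu \<rho>)
       = (\<integral>\<^sup>+\<eta>. ennreal (cond_occupied (card J) (\<Sum>y\<in>J. \<eta> y)) * F (\<Sum>y\<in>J. \<eta> y) \<partial>nu \<rho>)"
proof -
  define J' where "J' = J - {x}"
  define q where "q = ennreal (\<rho> / (1 + \<rho>))"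
  have fin': "finite J'" and x': "x \<notin> J'" and J: "J = insert x J'"
    using fin x unfolding J'_def by auto
  have card: "card J = Suc (card J')" using fin' x' J by simp
  have "(\<integral>\<^sup>+\<eta>. ennreal (g (\<eta> x)) * F (\<Sum>y\<in>J. \<eta> y) \<partial>nu \<rho>)
      = (\<integral>\<^sup>+\<eta>. ennreal (g (\<eta> x)) * F (\<eta> x + (\<Sum>y\<in>J'. \<eta> y)) \<partial>nu \<rho>)"
    unfolding J using fin' x' by simp
  also have "\<dots> = (\<integral>\<^sup>+\<eta>. \<integral>\<^sup>+k. ennreal (g k) * F (k + (\<Sum>y\<in>J'. \<eta> y)) \<partial>marg \<rho> \<partial>nu \<rho>)"
    by (rule site_indep_block[OF fin' x'])
  also have "\<dots> = (\<integral>\<^sup>+\<eta>. q * (\<integral>\<^sup>+k. F (Suc (k + (\<Sum>y\<in>J'. \<eta> y))) \<partial>marg \<rho>) \<partial>nu \<rho>)"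
    unfolding q_def by (simp add: marg_occupied_shift[OF rho])
  also have "\<dots> = (\<integral>\<^sup>+m. q * (\<integral>\<^sup>+k. F (Suc (k + m)) \<partial>marg \<rho>) \<partial>NB \<rho> (card J'))"
    by (rule block_sum_law[OF fin'])
  also have "\<dots> = q * (\<integral>\<^sup>+m. \<integral>\<^sup>+k. F (Suc (k + m)) \<partial>marg \<rho> \<partial>NB \<rho> (card J'))"
    by (simp add: nn_integral_cmult)
  also have "\<dots> = q * (\<integral>\<^sup>+n. F (Suc n) \<partial>NB \<rho> (card J))"
    unfolding card by (simp add: NB_convolution[where F="\<lambda>n. F (Suc n)"])
  also have "\<dots> = (\<integral>\<^sup>+n. ennreal (cond_occupied (card J) n) * F n \<partial>NB \<rho> (card J))"
    unfolding q_def using card by (simp add: NB_occupied_shift[OF rho])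
  also have "\<dots> = (\<integral>\<^sup>+\<eta>. ennreal (cond_occupied (card J) (\<Sum>y\<in>J. \<eta> y)) * F (\<Sum>y\<in>J. \<eta> y) \<partial>nu \<rho>)"
    by (rule block_sum_law[OF fin, symmetric])
  finally show ?thesis .
qed

fun falling :: "nat \<Rightarrow> nat \<Rightarrow> real" where
  "falling 0 n = 1"
| "falling (Suc j) n = real n * falling j (n - 1)"

lemma falling_nonneg: "falling j n \<ge> 0"
  by (induction j arbitrary: n) auto

lemma falling_prod: "falling j n = (\<Prod>i<j. real n - real i)"
proof (induction j arbitrary: n)
  case 0
  then show ?case by simp
next
  case (Suc j)
  show ?case
  proof (cases n)
    case 0
    then show ?thesis by (auto simp: prod.lessThan_Suc_shift)
  next
    case (Suc m)
    have "(\<Prod>i<Suc j. real (Suc m) - real i) = real (Suc m) * (\<Prod>i<j. real (Suc m) - real (Suc i))"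
      by (subst prod.lessThan_Suc_shift) simp
    also have "(\<Prod>i<j. real (Suc m) - real (Suc i)) = (\<Prod>i<j. real m - real i)"
      by (intro prod.cong) auto
    finally show ?thesis using Suc.IH[of m] unfolding Suc by simp
  qed
qed

lemma NB_size_bias:
  fixes F :: "nat \<Rightarrow> ennreal"
  assumes "\<rho> > 0"
  shows "(\<integral>\<^sup>+n. ennreal (real n) * F (n - 1) \<partial>NB \<rho> K)
       = ennreal (real K * \<rho>) * (\<integral>\<^sup>+n. F n \<partial>NB \<rho> (Suc K))"
proof -
  let ?P = "\<lambda>K. pmf (neg_binomial_pmf K (1 / (1 + \<rho>)))"
  have "(\<integral>\<^sup>+n. ennreal (real n) * F (n - 1) \<partial>NB \<rho> K)
      = (\<integral>\<^sup>+m. ennreal (?P K (Suc m)) * (ennreal (real (Suc m)) * F m) \<partial>count_space UNIV)"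
    by (subst nn_integral_pmf_shift) simp_all
  also have "\<dots> = (\<integral>\<^sup>+m. ennreal (real K * \<rho>) * (ennreal (?P (Suc K) m) * F m) \<partial>count_space UNIV)"
  proof (intro nn_integral_cong)
    fix m
    have "ennreal (?P K (Suc m)) * ennreal (real (Suc m)) = ennreal (?P K (Suc m) * real (Suc m))"
      by (rule ennreal_mult[symmetric]) auto
    also have "\<dots> = ennreal (real K * \<rho>) * ennreal (?P (Suc K) m)"
      unfolding pmf_NB_Suc(2)[OF assms] using assms by (intro ennreal_mult) auto
    finally have "ennreal (?P K (Suc m)) * ennreal (real (Suc m)) = ennreal (real K * \<rho>) * ennreal (?P (Suc K) m)" .
    then show "ennreal (?P K (Suc m)) * (ennreal (real (Suc m)) * F m)
             = ennreal (real K * \<rho>) * (ennreal (?P (Suc K) m) * F m)"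
      by (simp add: mult.assoc[symmetric])
  qed
  also have "\<dots> = ennreal (real K * \<rho>) * (\<integral>\<^sup>+n. F n \<partial>NB \<rho> (Suc K))"
    by (simp add: nn_integral_cmult nn_integral_measure_pmf)
  finally show ?thesis .
qed

lemma NB_factorial_moment_nn:
  assumes "\<rho> > 0"
  shows "(\<integral>\<^sup>+n. ennreal (falling j n) \<partial>NB \<rho> K) = ennreal (pochhammer (real K) j * \<rho> ^ j)"
proof (induction j arbitrary: K)
  case 0
  then show ?case by (simp add: measure_pmf.emeasure_space_1)
next
  case (Suc j)
  have "(\<integral>\<^sup>+n. ennreal (falling (Suc j) n) \<partial>NB \<rho> K)
      = (\<integral>\<^sup>+n. ennreal (real n) * ennreal (falling j (n - 1)) \<partial>NB \<rho> K)"
    by (simp add: ennreal_mult falling_nonneg)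
  also have "\<dots> = ennreal (real K * \<rho>) * ennreal (pochhammer (real (Suc K)) j * \<rho> ^ j)"
    unfolding NB_size_bias[OF assms, where F="\<lambda>k. ennreal (falling j k)"] Suc.IH ..
  also have "\<dots> = ennreal (pochhammer (real K) (Suc j) * \<rho> ^ Suc j)"
  proof -
    have "pochhammer (real K) (Suc j) * \<rho> ^ Suc j = (real K * \<rho>) * (pochhammer (real (Suc K)) j * \<rho> ^ j)"
      by (simp add: pochhammer_rec add.commute mult_ac)
    then show ?thesis
      using assms by (simp only:) (intro ennreal_mult[symmetric] mult_nonneg_nonneg pochhammer_nonneg, auto)
  qed
  finally show ?case .
qed

lemma NB_factorial_moment:
  assumes "\<rho> > 0"
  shows "integrable (NB \<rho> K) (falling j)"
    and "(\<integral>n. falling j n \<partial>NB \<rho> K) = pochhammer (real K) j * \<rho> ^ j"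
proof -
  have nonneg: "pochhammer (real K) j * \<rho> ^ j \<ge> 0"
    using assms by (simp add: pochhammer_of_nat)
  show "integrable (NB \<rho> K) (falling j)"
    by (rule integrableI_nonneg) (simp_all add: falling_nonneg NB_factorial_moment_nn[OF assms])
  have "(\<integral>n. falling j n \<partial>NB \<rho> K) = enn2real (\<integral>\<^sup>+n. ennreal (falling j n) \<partial>NB \<rho> K)"
    by (rule integral_eq_nn_integral) (simp_all add: falling_nonneg)
  then show "(\<integral>n. falling j n \<partial>NB \<rho> K) = pochhammer (real K) j * \<rho> ^ j"
    using nonneg by (simp add: NB_factorial_moment_nn[OF assms])
qed

lemma NB_polynomial_moment:
  assumes "\<rho> > 0"
  shows "integrable (NB \<rho> K) (\<lambda>n. \<Sum>j\<le>m. c j * falling j n)"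
    and "(\<integral>n. (\<Sum>j\<le>m. c j * falling j n) \<partial>NB \<rho> K) = (\<Sum>j\<le>m. c j * (pochhammer (real K) j * \<rho> ^ j))"
  using NB_factorial_moment[OF assms] by (auto simp: integral_sum)

lemma NB_central_moment_2:
  assumes "\<rho> > 0"
  shows "integrable (NB \<rho> K) (\<lambda>n. (real n - real K * \<rho>) ^ 2)"
    and "(\<integral>n. (real n - real K * \<rho>) ^ 2 \<partial>NB \<rho> K) = real K * \<rho> * (1 + \<rho>)"
proof -
  define c where "c = (\<lambda>j. [(real K * \<rho>) ^ 2, 1 - 2 * real K * \<rho>, 1] ! j)"
  have expand: "(real n - real K * \<rho>) ^ 2 = (\<Sum>j\<le>2. c j * falling j n)" for n
    unfolding c_def by (simp add: falling_prod eval_nat_numeral lessThan_Suc atMost_Suc) algebra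
  show "integrable (NB \<rho> K) (\<lambda>n. (real n - real K * \<rho>) ^ 2)"
    unfolding expand by (rule NB_polynomial_moment(1)[OF assms])
  show "(\<integral>n. (real n - real K * \<rho>) ^ 2 \<partial>NB \<rho> K) = real K * \<rho> * (1 + \<rho>)"
    unfolding expand NB_polynomial_moment(2)[OF assms]
    unfolding c_def by (simp add: eval_nat_numeral atMost_Suc pochhammer_Suc) algebra
qed

lemma NB_central_moment_4:
  assumes "\<rho> > 0"
  shows "integrable (NB \<rho> K) (\<lambda>n. (real n - real K * \<rho>) ^ 4)"
    and "(\<integral>n. (real n - real K * \<rho>) ^ 4 \<partial>NB \<rho> K)
           = 3 * (real K)\<^sup>2 * \<rho>\<^sup>2 * (1 + \<rho>)\<^sup>2 + real K * \<rho> * (1 + \<rho>) * (1 + 6 * \<rho> + 6 * \<rho>\<^sup>2)"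
proof -
  define a where "a = real K * \<rho>"
  define c where "c = (\<lambda>j. [a ^ 4, 1 - 4 * a + 6 * a ^ 2 - 4 * a ^ 3, 7 - 12 * a + 6 * a ^ 2, 6 - 4 * a, 1] ! j)"
  have expand: "(real n - real K * \<rho>) ^ 4 = (\<Sum>j\<le>4. c j * falling j n)" for n
    unfolding c_def a_def[symmetric] by (simp add: falling_prod eval_nat_numeral lessThan_Suc atMost_Suc) algebra
  show "integrable (NB \<rho> K) (\<lambda>n. (real n - real K * \<rho>) ^ 4)"
    unfolding expand by (rule NB_polynomial_moment(1)[OF assms])
  show "(\<integral>n. (real n - real K * \<rho>) ^ 4 \<partial>NB \<rho> K)
           = 3 * (real K)\<^sup>2 * \<rho>\<^sup>2 * (1 + \<rho>)\<^sup>2 + real K * \<rho> * (1 + \<rho>) * (1 + 6 * \<rho> + 6 * \<rho>\<^sup>2)"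
    unfolding expand NB_polynomial_moment(2)[OF assms]
    unfolding c_def a_def by (simp add: eval_nat_numeral atMost_Suc pochhammer_Suc) algebra
qed

lemma measurable_block_sum: "(\<lambda>\<eta>. \<Sum>x\<in>J. \<eta> x) \<in> nu \<rho> \<rightarrow>\<^sub>M count_space UNIV"
  unfolding nu_def by measurable

lemma measurable_site: "(\<lambda>\<eta>. \<eta> x) \<in> nu \<rho> \<rightarrow>\<^sub>M count_space (UNIV :: nat set)"
  unfolding nu_def by measurable

lemma borel_measurable_nat_comp:
  "h \<in> M \<rightarrow>\<^sub>M count_space UNIV \<Longrightarrow> (\<lambda>\<omega>. F (h \<omega>) :: real) \<in> borel_measurable M"
  by (rule measurable_compose[of h M "count_space UNIV"]) auto

lemma distr_block_sum:
  assumes "finite J"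
  shows "distr (nu \<rho>) (count_space UNIV) (\<lambda>\<eta>. \<Sum>x\<in>J. \<eta> x) = NB \<rho> (card J)"
proof (rule measure_eqI)
  fix A :: "nat set"
  let ?N = "\<lambda>\<eta>::int \<Rightarrow> nat. \<Sum>x\<in>J. \<eta> x"
  have "emeasure (distr (nu \<rho>) (count_space UNIV) ?N) A = emeasure (nu \<rho>) (?N -` A \<inter> space (nu \<rho>))"
    by (rule emeasure_distr[OF measurable_block_sum]) simp
  also have "\<dots> = (\<integral>\<^sup>+\<eta>. indicator (?N -` A \<inter> space (nu \<rho>)) \<eta> \<partial>nu \<rho>)"
    using measurable_sets[OF measurable_block_sum, of A] by (simp add: nn_integral_indicator)
  also have "\<dots> = (\<integral>\<^sup>+\<eta>. indicator A (?N \<eta>) \<partial>nu \<rho>)"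
    by (intro nn_integral_cong) (simp add: indicator_def)
  also have "\<dots> = emeasure (NB \<rho> (card J)) A"
    by (simp add: block_sum_law[OF assms] nn_integral_indicator)
  finally show "emeasure (distr (nu \<rho>) (count_space UNIV) (\<lambda>\<eta>. \<Sum>x\<in>J. \<eta> x)) A = emeasure (NB \<rho> (card J)) A" .
qed simp

lemma integrable_block_fun:
  fixes F :: "nat \<Rightarrow> real"
  assumes "finite J" and "integrable (NB \<rho> (card J)) F"
  shows "integrable (nu \<rho>) (\<lambda>\<eta>. F (\<Sum>x\<in>J. \<eta> x))"
  using assms integrable_distr_eq[OF measurable_block_sum, of F \<rho> J]
  by (simp add: distr_block_sum)

lemma integral_occupied_given_sum:
  assumes rho: "\<rho> > 0" and fin: "finite J" and x: "x \<in> J"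
  shows "(\<integral>\<eta>. indicator S (\<Sum>y\<in>J. \<eta> y) * g (\<eta> x) \<partial>nu \<rho>)
       = (\<integral>\<eta>. indicator S (\<Sum>y\<in>J. \<eta> y) * cond_occupied (card J) (\<Sum>y\<in>J. \<eta> y) \<partial>nu \<rho>)"
proof -
  have K: "card J \<ge> 1" using fin x by (metis One_nat_def Suc_leI card_gt_0_iff empty_iff)
  note meas = borel_measurable_nat_comp[OF measurable_block_sum] borel_measurable_nat_comp[OF measurable_site]
  have split: "ennreal (indicator S n * c) = ennreal c * ennreal (indicator S n)" if "c \<ge> 0" for c :: real and n
    using that by (simp add: indicator_def)
  have "(\<integral>\<eta>. indicator S (\<Sum>y\<in>J. \<eta> y) * g (\<eta> x) \<partial>nu \<rho>)
      = enn2real (\<integral>\<^sup>+\<eta>. ennreal (g (\<eta> x)) * ennreal (indicator S (\<Sum>y\<in>J. \<eta> y)) \<partial>nu \<rho>)"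
    by (subst integral_eq_nn_integral) (auto intro!: borel_measurable_times meas simp: g_def split)
  also have "\<dots> = enn2real (\<integral>\<^sup>+\<eta>. ennreal (cond_occupied (card J) (\<Sum>y\<in>J. \<eta> y))
                              * ennreal (indicator S (\<Sum>y\<in>J. \<eta> y)) \<partial>nu \<rho>)"
    by (simp only: block_occupied_given_sum[OF rho fin x, where F="\<lambda>n. ennreal (indicator S n)"])
  also have "\<dots> = (\<integral>\<eta>. indicator S (\<Sum>y\<in>J. \<eta> y) * cond_occupied (card J) (\<Sum>y\<in>J. \<eta> y) \<partial>nu \<rho>)"
    using cond_occupied_bounds[OF K]
    by (subst integral_eq_nn_integral) (auto intro!: borel_measurable_times meas simp: split)
  finally show ?thesis .
qed

lemma MI_sigma_finite_subalgebra: "sigma_finite_subalgebra (nu \<rho>) (MI \<rho> J)"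
proof (intro finite_measure_subalgebra_is_sigma_finite finite_measure_subalgebra.intro)
  interpret prob_space "nu \<rho>" by (rule prob_space_nu)
  show "finite_measure (nu \<rho>)" by (rule finite_measure_axioms)
  have "sets (MI \<rho> J) \<subseteq> sets (nu \<rho>)"
    unfolding MI_def using measurable_sets[OF measurable_block_sum]
    by (subst sets_vimage_algebra2) auto
  then show "finite_measure_subalgebra_axioms (nu \<rho>) (MI \<rho> J)"
    unfolding finite_measure_subalgebra_axioms_def subalgebra_def by (simp add: MI_def)
qed

definition block_linear :: "real \<Rightarrow> nat \<Rightarrow> nat \<Rightarrow> real" where
  "block_linear \<rho> K n = real K * phi \<rho> + deriv phi \<rho> * (real n - real K * \<rho>)"

(* The conditional expectation of sum_{x in J} V_g(eta x) given N = n, for |J| = K. *)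
definition block_cond_V :: "real \<Rightarrow> nat \<Rightarrow> nat \<Rightarrow> real" where
  "block_cond_V \<rho> K n = real K * cond_occupied K n - block_linear \<rho> K n"

lemma sum_Vg_decomposition:
  "(\<Sum>x\<in>J. Vg \<rho> (\<eta> x)) = (\<Sum>x\<in>J. g (\<eta> x)) - block_linear \<rho> (card J) (\<Sum>x\<in>J. \<eta> x)"
  unfolding block_linear_def Vg_def
  by (simp add: sum.distrib sum_subtractf sum_distrib_left of_nat_sum algebra_simps)

lemma integrable_block_terms:
  assumes rho: "\<rho> > 0" and fin: "finite J" and ne: "J \<noteq> {}"
  shows "integrable (nu \<rho>) (\<lambda>\<eta>. indicator S (\<Sum>y\<in>J. \<eta> y) * g (\<eta> x))"
    and "integrable (nu \<rho>) (\<lambda>\<eta>. indicator S (\<Sum>y\<in>J. \<eta> y) * cond_occupied (card J) (\<Sum>y\<in>J. \<eta> y))"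
    and "integrable (nu \<rho>) (\<lambda>\<eta>. indicator S (\<Sum>y\<in>J. \<eta> y) * block_linear \<rho> (card J) (\<Sum>y\<in>J. \<eta> y))"
proof -
  interpret prob_space "nu \<rho>" by (rule prob_space_nu)
  have K: "card J \<ge> 1" using fin ne by (simp add: Suc_leI card_gt_0_iff)
  note meas = borel_measurable_nat_comp[OF measurable_block_sum] borel_measurable_nat_comp[OF measurable_site]
  show "integrable (nu \<rho>) (\<lambda>\<eta>. indicator S (\<Sum>y\<in>J. \<eta> y) * g (\<eta> x))"
    by (intro integrable_const_bound[where B=1])
       (auto intro!: borel_measurable_times meas simp: g_def indicator_def)
  show "integrable (nu \<rho>) (\<lambda>\<eta>. indicator S (\<Sum>y\<in>J. \<eta> y) * cond_occupied (card J) (\<Sum>y\<in>J. \<eta> y))"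
    using cond_occupied_bounds[OF K]
    by (intro integrable_const_bound[where B=1])
       (auto intro!: borel_measurable_times meas simp: indicator_def)
  have "falling 1 = real" by (rule ext) simp
  then have "integrable (NB \<rho> (card J)) (\<lambda>n. block_linear \<rho> (card J) n * indicator S n)"
    using NB_factorial_moment(1)[OF rho, of "card J" 1] unfolding block_linear_def
    by (intro integrable_real_mult_indicator) auto
  then show "integrable (nu \<rho>) (\<lambda>\<eta>. indicator S (\<Sum>y\<in>J. \<eta> y) * block_linear \<rho> (card J) (\<Sum>y\<in>J. \<eta> y))"
    by (intro integrable_block_fun[OF fin]) (simp add: mult.commute)
qed

lemma set_integral_block_V:
  assumes rho: "\<rho> > 0" and fin: "finite J" and ne: "J \<noteq> {}" and A_sets: "A \<in> sets (MI \<rho> J)"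
  shows "(\<integral>\<eta>\<in>A. (\<Sum>x\<in>J. Vg \<rho> (\<eta> x)) \<partial>nu \<rho>) = (\<integral>\<eta>\<in>A. block_cond_V \<rho> (card J) (\<Sum>x\<in>J. \<eta> x) \<partial>nu \<rho>)"
proof -
  define N where "N = (\<lambda>\<eta>::int \<Rightarrow> nat. \<Sum>x\<in>J. \<eta> x)"
  define K where "K = card J"
  define L where "L = block_linear \<rho> K"
  obtain S where A: "A = N -` S \<inter> space (nu \<rho>)"
    using A_sets unfolding MI_def N_def by (subst (asm) sets_vimage_algebra2) auto
  have ind: "indicator A \<eta> = indicator S (N \<eta>)" if "\<eta> \<in> space (nu \<rho>)" for \<eta>
    using that unfolding A by (simp add: indicator_def)
  note int = integrable_block_terms[OF rho fin ne, of S]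
  have "(\<integral>\<eta>\<in>A. (\<Sum>x\<in>J. Vg \<rho> (\<eta> x)) \<partial>nu \<rho>)
      = (\<integral>\<eta>. (\<Sum>x\<in>J. indicator S (N \<eta>) * g (\<eta> x)) - indicator S (N \<eta>) * L (N \<eta>) \<partial>nu \<rho>)"
    unfolding set_lebesgue_integral_def sum_Vg_decomposition
    by (intro Bochner_Integration.integral_cong)
       (auto simp: ind N_def K_def L_def sum_distrib_left algebra_simps)
  also have "\<dots> = (\<Sum>x\<in>J. \<integral>\<eta>. indicator S (N \<eta>) * g (\<eta> x) \<partial>nu \<rho>) - (\<integral>\<eta>. indicator S (N \<eta>) * L (N \<eta>) \<partial>nu \<rho>)"
    using int unfolding N_def K_def L_def by (simp add: integral_sum)
  also have "\<dots> = real K * (\<integral>\<eta>. indicator S (N \<eta>) * cond_occupied K (N \<eta>) \<partial>nu \<rho>)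
                   - (\<integral>\<eta>. indicator S (N \<eta>) * L (N \<eta>) \<partial>nu \<rho>)"
    unfolding N_def K_def using integral_occupied_given_sum[OF rho fin] by simp
  also have "\<dots> = (\<integral>\<eta>. real K * (indicator S (N \<eta>) * cond_occupied K (N \<eta>)) - indicator S (N \<eta>) * L (N \<eta>) \<partial>nu \<rho>)"
    using int unfolding N_def K_def L_def by simp
  also have "\<dots> = (\<integral>\<eta>\<in>A. block_cond_V \<rho> K (N \<eta>) \<partial>nu \<rho>)"
    unfolding set_lebesgue_integral_def block_cond_V_def L_def
    by (intro Bochner_Integration.integral_cong) (auto simp: ind algebra_simps)
  finally show ?thesis unfolding N_def K_def .
qed

lemma cond_exp_block_V:
  assumes rho: "\<rho> > 0" and fin: "finite J" and ne: "J \<noteq> {}"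
  shows "AE \<eta> in nu \<rho>. real_cond_exp (nu \<rho>) (MI \<rho> J) (\<lambda>\<eta>. \<Sum>x\<in>J. Vg \<rho> (\<eta> x)) \<eta>
                          = block_cond_V \<rho> (card J) (\<Sum>x\<in>J. \<eta> x)"
proof (rule sigma_finite_subalgebra.real_cond_exp_charact[OF MI_sigma_finite_subalgebra])
  note int = integrable_block_terms[OF rho fin ne, of UNIV]
  show "integrable (nu \<rho>) (\<lambda>\<eta>. \<Sum>x\<in>J. Vg \<rho> (\<eta> x))"
    unfolding sum_Vg_decomposition using int by auto
  show "integrable (nu \<rho>) (\<lambda>\<eta>. block_cond_V \<rho> (card J) (\<Sum>x\<in>J. \<eta> x))"
    unfolding block_cond_V_def using int by auto
  show "(\<lambda>\<eta>. block_cond_V \<rho> (card J) (\<Sum>x\<in>J. \<eta> x)) \<in> borel_measurable (MI \<rho> J)"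
    unfolding MI_def by (intro borel_measurable_nat_comp measurable_vimage_algebra1) simp
qed (rule set_integral_block_V[OF rho fin ne])

lemma deriv_phi:
  assumes "\<rho> > 0"
  shows "deriv phi \<rho> = 1 / (1 + \<rho>)\<^sup>2"
proof -
  have "(phi has_real_derivative 1 / (1 + \<rho>)\<^sup>2) (at \<rho>)"
    unfolding phi_def[abs_def] using assms
    by (auto intro!: derivative_eq_intros simp: field_simps power2_eq_square)
  then show ?thesis by (rule DERIV_imp_deriv)
qed

lemma block_cond_V_identity:
  fixes n :: nat
  assumes rho: "\<rho> > 0" and K: "K \<ge> 1"
  defines "d \<equiv> real n - real K * \<rho>"
  shows "block_cond_V \<rho> K n * ((1 + \<rho>)\<^sup>2 * (real n + real K - 1)) = real K * \<rho> * (1 + \<rho>) - d\<^sup>2 + d"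
proof -
  define s where "s = real n + real K - 1"
  have occ: "real K * cond_occupied K n * s = real K * real n"
    unfolding cond_occupied_def s_def[symmetric]
    by (cases "s = 0") (use K in \<open>auto simp: s_def\<close>)
  have "block_cond_V \<rho> K n * ((1 + \<rho>)\<^sup>2 * s)
      = (real K * cond_occupied K n * s) * (1 + \<rho>)\<^sup>2 - real K * \<rho> * (1 + \<rho>) * s - d * s"
  proof -
    have "(a - (b * (\<rho> / x) + 1 / x\<^sup>2 * c)) * (x\<^sup>2 * s) = a * s * x\<^sup>2 - b * \<rho> * x * s - c * s"
      if "x \<noteq> 0" for a b c x :: real
      using that by (simp add: field_simps power2_eq_square)
    from this[of "1 + \<rho>"] rho show ?thesis
      unfolding block_cond_V_def block_linear_def deriv_phi[OF rho] phi_def d_def by simp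
  qed
  also have "\<dots> = real K * \<rho> * (1 + \<rho>) - d\<^sup>2 + d"
    unfolding occ unfolding s_def d_def by (simp add: power2_eq_square algebra_simps)
  finally show ?thesis unfolding s_def .
qed

lemma sum3_sq_le: "(x + y + z)\<^sup>2 \<le> 3 * (x\<^sup>2 + y\<^sup>2 + z\<^sup>2)" for x y z :: real
proof -
  have "0 \<le> (x - y)\<^sup>2 + (y - z)\<^sup>2 + (x - z)\<^sup>2" by simp
  then show ?thesis by (simp add: power2_eq_square algebra_simps)
qed

lemma block_cond_V_empty_block:
  assumes rho: "\<rho> > 0"
  shows "block_cond_V \<rho> 1 0 = - (\<rho> / (1 + \<rho>))\<^sup>2"
proof -
  define t where "t = \<rho> / (1 + \<rho>)"
  have "1 / (1 + \<rho>)\<^sup>2 * \<rho> = t * (1 / (1 + \<rho>))"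
    unfolding t_def by (simp add: power2_eq_square)
  also have "1 / (1 + \<rho>) = 1 - t"
    unfolding t_def using rho by (simp add: field_simps)
  finally have "- (\<rho> / (1 + \<rho>) + 1 / (1 + \<rho>)\<^sup>2 * (0 - \<rho>)) = - (\<rho> / (1 + \<rho>))\<^sup>2"
    unfolding t_def[symmetric] by (simp add: power2_eq_square algebra_simps)
  then show ?thesis
    unfolding block_cond_V_def block_linear_def cond_occupied_def deriv_phi[OF rho] phi_def by simp
qed

(* Pointwise bound by the centred second and fourth powers, using n+K-1 >= K/2
   except in the degenerate case K = 1, n = 0. *)
lemma block_cond_V_sq_bound:
  fixes n :: nat
  assumes rho: "\<rho> > 0" and K: "K \<ge> 1"
  defines "d \<equiv> real n - real K * \<rho>" and "\<kappa> \<equiv> 12 / (1 + \<rho>) ^ 4"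
  shows "(block_cond_V \<rho> K n)\<^sup>2 \<le> 1 + \<kappa> * (\<rho>\<^sup>2 * (1 + \<rho>)\<^sup>2 + (d\<^sup>2 + d ^ 4) / (real K)\<^sup>2)"
proof -
  have rest_nonneg: "0 \<le> \<kappa> * (\<rho>\<^sup>2 * (1 + \<rho>)\<^sup>2 + (d\<^sup>2 + d ^ 4) / (real K)\<^sup>2)"
    unfolding \<kappa>_def using rho by (intro mult_nonneg_nonneg add_nonneg_nonneg) auto
  show ?thesis
  proof (cases "K = 1 \<and> n = 0")
    case True
    then have "block_cond_V \<rho> K n = - (\<rho> / (1 + \<rho>))\<^sup>2"
      using block_cond_V_empty_block[OF rho] by simp
    then have "(block_cond_V \<rho> K n)\<^sup>2 = (\<rho> / (1 + \<rho>)) ^ 4"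
      by (simp flip: power_mult)
    also have "\<dots> \<le> 1" using rho by (intro power_le_one) auto
    finally have "(block_cond_V \<rho> K n)\<^sup>2 \<le> 1" .
    then show ?thesis using rest_nonneg by linarith
  next
    case False
    define s where "s = real n + real K - 1"
    have s: "s \<ge> real K / 2" unfolding s_def using False K by auto
    have W_pos: "((1 + \<rho>)\<^sup>2 * (real K / 2))\<^sup>2 > 0" using rho K by simp
    have "(block_cond_V \<rho> K n)\<^sup>2 * ((1 + \<rho>)\<^sup>2 * (real K / 2))\<^sup>2
        \<le> (block_cond_V \<rho> K n)\<^sup>2 * ((1 + \<rho>)\<^sup>2 * s)\<^sup>2"
      using s K rho by (intro mult_left_mono power_mono) auto
    also have "\<dots> = (real K * \<rho> * (1 + \<rho>) + - (d\<^sup>2) + d)\<^sup>2"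
      using block_cond_V_identity[OF rho K, of n] unfolding s_def d_def
      by (simp flip: power_mult_distrib)
    also have "\<dots> \<le> 3 * ((real K)\<^sup>2 * (\<rho>\<^sup>2 * (1 + \<rho>)\<^sup>2) + (d\<^sup>2 + d ^ 4))"
      using sum3_sq_le[of "real K * \<rho> * (1 + \<rho>)" "- (d\<^sup>2)" d]
      by (simp add: power_mult_distrib power2_eq_square power4_eq_xxxx algebra_simps)
    finally have "(block_cond_V \<rho> K n)\<^sup>2
        \<le> 3 * ((real K)\<^sup>2 * (\<rho>\<^sup>2 * (1 + \<rho>)\<^sup>2) + (d\<^sup>2 + d ^ 4)) / ((1 + \<rho>)\<^sup>2 * (real K / 2))\<^sup>2"
      using W_pos by (simp add: pos_le_divide_eq)
    also have "\<dots> = \<kappa> * (\<rho>\<^sup>2 * (1 + \<rho>)\<^sup>2 + (d\<^sup>2 + d ^ 4) / (real K)\<^sup>2)"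
      unfolding \<kappa>_def using rho K by (simp add: field_simps power2_eq_square power4_eq_xxxx)
    finally show ?thesis by linarith
  qed
qed

definition block_bound :: "real \<Rightarrow> real" where
  "block_bound \<rho> = 1 + 12 / (1 + \<rho>) ^ 4 * (4 * \<rho>\<^sup>2 * (1 + \<rho>)\<^sup>2 + \<rho> * (1 + \<rho>) * (2 + 6 * \<rho> + 6 * \<rho>\<^sup>2))"

(* Integrating the pointwise bound with the NB moments gives a bound uniform in K. *)
lemma NB_block_cond_V_sq:
  assumes rho: "\<rho> > 0" and K: "K \<ge> 1"
  shows "(\<integral>\<^sup>+n. ennreal ((block_cond_V \<rho> K n)\<^sup>2) \<partial>NB \<rho> K) \<le> ennreal (block_bound \<rho>)"
proof -
  define \<kappa> where "\<kappa> = 12 / (1 + \<rho>) ^ 4"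
  define B where "B = (\<lambda>n::nat. 1 + \<kappa> * (\<rho>\<^sup>2 * (1 + \<rho>)\<^sup>2
                         + ((real n - real K * \<rho>)\<^sup>2 + (real n - real K * \<rho>) ^ 4) / (real K)\<^sup>2))"
  have \<kappa>: "\<kappa> > 0" unfolding \<kappa>_def using rho by simp
  have B_nonneg: "B n \<ge> 0" for n
    unfolding B_def using \<kappa> by (intro add_nonneg_nonneg mult_nonneg_nonneg) auto
  note m2 = NB_central_moment_2[OF rho, of K] and m4 = NB_central_moment_4[OF rho, of K]
  have int_B: "integrable (NB \<rho> K) B"
    unfolding B_def using m2(1) m4(1) by auto
  have "(\<integral>n. B n \<partial>NB \<rho> K)
      = 1 + \<kappa> * (\<rho>\<^sup>2 * (1 + \<rho>)\<^sup>2 + (real K * \<rho> * (1 + \<rho>) + (3 * (real K)\<^sup>2 * \<rho>\<^sup>2 * (1 + \<rho>)\<^sup>2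
                 + real K * \<rho> * (1 + \<rho>) * (1 + 6 * \<rho> + 6 * \<rho>\<^sup>2))) / (real K)\<^sup>2)"
    unfolding B_def using m2 m4 by (simp add: measure_pmf.prob_space)
  also have "\<dots> = 1 + \<kappa> * (4 * \<rho>\<^sup>2 * (1 + \<rho>)\<^sup>2 + \<rho> * (1 + \<rho>) * (2 + 6 * \<rho> + 6 * \<rho>\<^sup>2) / real K)"
    using K by (simp add: field_simps power2_eq_square)
  also have "\<dots> \<le> block_bound \<rho>"
  proof -
    define X where "X = \<rho> * (1 + \<rho>) * (2 + 6 * \<rho> + 6 * \<rho>\<^sup>2)"
    have "X * 1 \<le> X * real K" unfolding X_def using rho K by (intro mult_left_mono) auto
    then have "X / real K \<le> X" using K by (simp add: divide_le_eq)
    then show ?thesis unfolding block_bound_def \<kappa>_def[symmetric] X_def[symmetric] using \<kappa> by (simp add: mult_left_mono)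
  qed
  finally have int_le: "(\<integral>n. B n \<partial>NB \<rho> K) \<le> block_bound \<rho>" .
  have "(\<integral>\<^sup>+n. ennreal ((block_cond_V \<rho> K n)\<^sup>2) \<partial>NB \<rho> K) \<le> (\<integral>\<^sup>+n. ennreal (B n) \<partial>NB \<rho> K)"
    unfolding B_def \<kappa>_def by (intro nn_integral_mono ennreal_leI block_cond_V_sq_bound[OF rho K])
  also have "\<dots> = ennreal (\<integral>n. B n \<partial>NB \<rho> K)"
    by (rule nn_integral_eq_integral[OF int_B]) (simp add: B_nonneg)
  also have "\<dots> \<le> ennreal (block_bound \<rho>)"
    by (rule ennreal_leI[OF int_le])
  finally show ?thesis .
qed

theorem mainTheorem12:
  fixes \<rho> :: real
  assumes "\<rho> > 0"
  shows "\<exists>C::real. \<forall>K::nat. \<forall>a::int. K \<ge> 1 \<longrightarrow>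
    (\<integral>\<^sup>+ \<eta>. ennreal ((real_cond_exp (nu \<rho>) (MI \<rho> {a..a + int K - 1})
        (\<lambda>\<eta>. \<Sum>x\<in>{a..a + int K - 1}. Vg \<rho> (\<eta> x)) \<eta>)\<^sup>2) \<partial>nu \<rho>) \<le> ennreal C"
proof (intro exI allI impI)
  fix K :: nat and a :: int
  assume K: "K \<ge> 1"
  define J where "J = {a..a + int K - 1}"
  have fin: "finite J" and card: "card J = K" and ne: "J \<noteq> {}"
    unfolding J_def using K by auto
  have "(\<integral>\<^sup>+ \<eta>. ennreal ((real_cond_exp (nu \<rho>) (MI \<rho> J) (\<lambda>\<eta>. \<Sum>x\<in>J. Vg \<rho> (\<eta> x)) \<eta>)\<^sup>2) \<partial>nu \<rho>)
      = (\<integral>\<^sup>+ \<eta>. ennreal ((block_cond_V \<rho> K (\<Sum>x\<in>J. \<eta> x))\<^sup>2) \<partial>nu \<rho>)"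
    using cond_exp_block_V[OF assms fin ne] unfolding card by (intro nn_integral_cong_AE) auto
  also have "\<dots> = (\<integral>\<^sup>+n. ennreal ((block_cond_V \<rho> K n)\<^sup>2) \<partial>NB \<rho> K)"
    using block_sum_law[OF fin] unfolding card .
  also have "\<dots> \<le> ennreal (block_bound \<rho>)"
    by (rule NB_block_cond_V_sq[OF assms K])
  finally show "(\<integral>\<^sup>+ \<eta>. ennreal ((real_cond_exp (nu \<rho>) (MI \<rho> {a..a + int K - 1})
        (\<lambda>\<eta>. \<Sum>x\<in>{a..a + int K - 1}. Vg \<rho> (\<eta> x)) \<eta>)\<^sup>2) \<partial>nu \<rho>) \<le> ennreal (block_bound \<rho>)"
    unfolding J_def .
qed

end
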